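(* Let $R$ be a finite Frobenius ring and $M=\{x_0=0,x_1,\ldots,x_n\}$ a finite $R$-bimodule. Then all matrices of the form $[\chi(B(x_i,x_j))]_{0\le i,j\le n}$, where $\chi$ ranges over generating characters of $R$ and $B$ over non-degenerate bilinear forms on $M$, are equivalent to one another.
   Context: A bilinear form on $M$ is a biadditive map $B:M\times M\to R$ with $B(rx,y)=rB(x,y)$ and $B(x,yr)=B(x,y)r$; it is non-degenerate if its left and right kernels are zero. A character of $R$ is a group homomorphism $(R,+)\to\mathbb{C}^*$; it is generating if its kernel contains no nonzero left ideal and no nonzero right ideal of $R$. Two matrices with root-of-unity entries are equivalent if one is obtained from the other by permuting rows and columns and multiplying rows and columns by roots of unity. *)

theory Defs
  imports Complex_Main "HOL-Combinatorics.Permutations"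
begin

definition bimodule :: "('a::ring_1 \<Rightarrow> 'm::ab_group_add \<Rightarrow> 'm) \<Rightarrow> ('m \<Rightarrow> 'a \<Rightarrow> 'm) \<Rightarrow> bool" where
  "bimodule lm rm \<longleftrightarrow>
     (\<forall>r x y. lm r (x + y) = lm r x + lm r y) \<and>
     (\<forall>r s x. lm (r + s) x = lm r x + lm s x) \<and>
     (\<forall>r s x. lm (r * s) x = lm r (lm s x)) \<and>
     (\<forall>x. lm 1 x = x) \<and>
     (\<forall>r x y. rm (x + y) r = rm x r + rm y r) \<and>
     (\<forall>r s x. rm x (r + s) = rm x r + rm x s) \<and>
     (\<forall>r s x. rm x (r * s) = rm (rm x r) s) \<and>
     (\<forall>x. rm x 1 = x) \<and>
     (\<forall>r s x. rm (lm r x) s = lm r (rm x s))"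

definition bilinear_form ::
  "('a::ring_1 \<Rightarrow> 'm::ab_group_add \<Rightarrow> 'm) \<Rightarrow> ('m \<Rightarrow> 'a \<Rightarrow> 'm) \<Rightarrow> ('m \<Rightarrow> 'm \<Rightarrow> 'a) \<Rightarrow> bool" where
  "bilinear_form lm rm B \<longleftrightarrow>
     (\<forall>x x' y. B (x + x') y = B x y + B x' y) \<and>
     (\<forall>x y y'. B x (y + y') = B x y + B x y') \<and>
     (\<forall>r x y. B (lm r x) y = r * B x y) \<and>
     (\<forall>r x y. B x (rm y r) = B x y * r)"

definition nondegenerate :: "('m::ab_group_add \<Rightarrow> 'm \<Rightarrow> 'a::ring_1) \<Rightarrow> bool" where
  "nondegenerate B \<longleftrightarrow>
     {x. \<forall>y. B x y = 0} = {0} \<and> {y. \<forall>x. B x y = 0} = {0}"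

definition character :: "('a::ring_1 \<Rightarrow> complex) \<Rightarrow> bool" where
  "character \<chi> \<longleftrightarrow> (\<forall>a b. \<chi> (a + b) = \<chi> a * \<chi> b) \<and> (\<forall>a. \<chi> a \<noteq> 0)"

definition left_ideal :: "'a::ring_1 set \<Rightarrow> bool" where
  "left_ideal I \<longleftrightarrow> 0 \<in> I \<and> (\<forall>x\<in>I. \<forall>y\<in>I. x + y \<in> I) \<and> (\<forall>x\<in>I. - x \<in> I)
     \<and> (\<forall>r. \<forall>x\<in>I. r * x \<in> I)"

definition right_ideal :: "'a::ring_1 set \<Rightarrow> bool" where
  "right_ideal I \<longleftrightarrow> 0 \<in> I \<and> (\<forall>x\<in>I. \<forall>y\<in>I. x + y \<in> I) \<and> (\<forall>x\<in>I. - x \<in> I)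
     \<and> (\<forall>r. \<forall>x\<in>I. x * r \<in> I)"

definition generating_character :: "('a::ring_1 \<Rightarrow> complex) \<Rightarrow> bool" where
  "generating_character \<chi> \<longleftrightarrow> character \<chi> \<and>
     (\<forall>I. left_ideal I \<and> I \<subseteq> {a. \<chi> a = 1} \<longrightarrow> I = {0}) \<and>
     (\<forall>I. right_ideal I \<and> I \<subseteq> {a. \<chi> a = 1} \<longrightarrow> I = {0})"

text \<open>A finite ring is Frobenius iff it admits a generating character (Wood);
we use this as the definition for finite rings.\<close>
definition Frobenius_ring :: "'a::{ring_1,finite} itself \<Rightarrow> bool" where
  "Frobenius_ring _ \<longleftrightarrow> (\<exists>\<chi>::'a \<Rightarrow> complex. generating_character \<chi>)"

definition root_of_unity :: "complex \<Rightarrow> bool" where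
  "root_of_unity z \<longleftrightarrow> (\<exists>k::nat. k > 0 \<and> z ^ k = 1)"

definition mat_equivalent :: "nat \<Rightarrow> (nat \<Rightarrow> nat \<Rightarrow> complex) \<Rightarrow> (nat \<Rightarrow> nat \<Rightarrow> complex) \<Rightarrow> bool" where
  "mat_equivalent n A C \<longleftrightarrow>
     (\<exists>\<sigma> \<tau> u v. \<sigma> permutes {0..n} \<and> \<tau> permutes {0..n} \<and>
        (\<forall>i\<le>n. root_of_unity (u i)) \<and> (\<forall>j\<le>n. root_of_unity (v j)) \<and>
        (\<forall>i\<le>n. \<forall>j\<le>n. C i j = u i * v j * A (\<sigma> i) (\<tau> j)))"

end

theory Submission
  imports Defs
begin

text \<open>For a generating character \<open>\<chi>\<close> and a non-degenerate bilinear form \<open>B\<close> on a finite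
module \<open>M\<close>, the map \<open>y \<mapsto> \<chi> (B - y)\<close> is a bijection from \<open>M\<close> onto its group of additive
characters. It is injective: if \<open>\<chi> (B - y) = 1\<close>, the left ideal \<open>B M y\<close> lies in the kernel
of \<open>\<chi>\<close>, hence is zero, and non-degeneracy gives \<open>y = 0\<close>. It is surjective by character
orthogonality: summing \<open>\<chi> (B x y) / \<psi> x\<close> over \<open>x\<close> and \<open>y\<close> in both orders would give \<open>0\<close> for
a character \<open>\<psi>\<close> that is not represented, yet it equals \<open>|M|\<close>. Hence two such pairs \<open>(\<chi>\<^sub>1, B\<^sub>1)\<close>,
\<open>(\<chi>\<^sub>2, B\<^sub>2)\<close> produce the same set of columns, and the matrices differ only by a column
permutation.\<close>

definition additive_character :: "('m::ab_group_add \<Rightarrow> complex) \<Rightarrow> bool" where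
  "additive_character \<psi> \<longleftrightarrow> (\<forall>a b. \<psi> (a + b) = \<psi> a * \<psi> b) \<and> (\<forall>a. \<psi> a \<noteq> 0)"

lemma character_iff_additive_character: "character \<chi> \<longleftrightarrow> additive_character \<chi>"
  by (simp add: character_def additive_character_def)

lemma generating_character_imp_additive_character:
  "generating_character \<chi> \<Longrightarrow> additive_character \<chi>"
  by (simp add: generating_character_def character_iff_additive_character)

lemma additive_character_add: "additive_character \<psi> \<Longrightarrow> \<psi> (a + b) = \<psi> a * \<psi> b"
  by (simp add: additive_character_def)

lemma additive_character_nonzero: "additive_character \<psi> \<Longrightarrow> \<psi> a \<noteq> 0"
  by (simp add: additive_character_def)

lemma additive_character_zero:
  assumes "additive_character \<psi>"
  shows "\<psi> 0 = 1"
proof -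
  have "\<psi> 0 * \<psi> 0 = \<psi> 0 * 1"
    using additive_character_add[OF assms, of 0 0] by simp
  then show ?thesis
    using additive_character_nonzero[OF assms] by (metis mult_left_cancel)
qed

lemma additive_character_diff:
  assumes "additive_character \<psi>"
  shows "\<psi> (a - b) = \<psi> a / \<psi> b"
  using additive_character_add[OF assms, of "a - b" b] additive_character_nonzero[OF assms, of b]
  by (simp add: field_simps)

lemma additive_character_comp_additive:
  assumes "additive_character \<psi>" and "additive f"
  shows "additive_character (\<lambda>x. \<psi> (f x))"
  using assms by (simp add: additive_character_def additive.add)

lemma additive_character_divide:
  assumes "additive_character \<psi>" and "additive_character \<phi>"
  shows "additive_character (\<lambda>x. \<psi> x / \<phi> x)"
  using assms by (simp add: additive_character_def)

lemma sum_additive_character_eq_0: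
  fixes \<psi> :: "'m::{ab_group_add,finite} \<Rightarrow> complex"
  assumes \<psi>: "additive_character \<psi>" and "\<psi> a \<noteq> 1"
  shows "(\<Sum>x\<in>UNIV. \<psi> x) = 0"
proof -
  have "(\<Sum>x\<in>UNIV. \<psi> x) = (\<Sum>x\<in>UNIV. \<psi> (x + a))"
    by (rule sum.reindex_bij_witness[where i="\<lambda>x. x + a" and j="\<lambda>x. x - a"]) auto
  also have "\<dots> = \<psi> a * (\<Sum>x\<in>UNIV. \<psi> x)"
    by (simp add: additive_character_add[OF \<psi>] sum_distrib_left mult.commute)
  finally have "(1 - \<psi> a) * (\<Sum>x\<in>UNIV. \<psi> x) = 0"
    by (simp add: algebra_simps)
  with \<open>\<psi> a \<noteq> 1\<close> show ?thesis by simp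
qed

lemma bilinear_form_additive_left: "bilinear_form lm rm B \<Longrightarrow> additive (\<lambda>x. B x y)"
  by (simp add: bilinear_form_def additive_def)

lemma bilinear_form_additive_right: "bilinear_form lm rm B \<Longrightarrow> additive (B x)"
  by (simp add: bilinear_form_def additive_def)

lemma left_ideal_range_bilinear_form:
  assumes B: "bilinear_form lm rm B"
  shows "left_ideal (range (\<lambda>x. B x y))"
proof -
  interpret additive "\<lambda>x. B x y" by (rule bilinear_form_additive_left[OF B])
  have "B (lm r x) y = r * B x y" for r x
    using B by (simp add: bilinear_form_def)
  then show ?thesis
    unfolding left_ideal_def by (auto simp flip: zero add minus) (metis rangeI)
qed

lemma right_ideal_range_bilinear_form:
  assumes B: "bilinear_form lm rm B"
  shows "right_ideal (range (B x))"
proof -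
  interpret additive "B x" by (rule bilinear_form_additive_right[OF B])
  have "B x (rm y r) = B x y * r" for r y
    using B by (simp add: bilinear_form_def)
  then show ?thesis
    unfolding right_ideal_def by (auto simp flip: zero add minus) (metis rangeI)
qed

lemma generating_character_bilinear_left_kernel:
  assumes \<chi>: "generating_character \<chi>" and B: "bilinear_form lm rm B" "nondegenerate B"
    and trivial: "\<And>x. \<chi> (B x y) = 1"
  shows "y = 0"
proof -
  have "range (\<lambda>x. B x y) = {0}"
    using \<chi> left_ideal_range_bilinear_form[OF B(1)] trivial
    unfolding generating_character_def by blast
  then show ?thesis
    using B(2) unfolding nondegenerate_def by blast
qed

lemma generating_character_bilinear_right_kernel:
  assumes \<chi>: "generating_character \<chi>" and B: "bilinear_form lm rm B" "nondegenerate B"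
    and trivial: "\<And>y. \<chi> (B x y) = 1"
  shows "x = 0"
proof -
  have "range (B x) = {0}"
    using \<chi> right_ideal_range_bilinear_form[OF B(1)] trivial
    unfolding generating_character_def by blast
  then show ?thesis
    using B(2) unfolding nondegenerate_def by blast
qed

lemma sum_generating_character_bilinear:
  fixes B :: "'m::{ab_group_add,finite} \<Rightarrow> 'm \<Rightarrow> 'a::ring_1"
  assumes \<chi>: "generating_character \<chi>" and B: "bilinear_form lm rm B" "nondegenerate B"
  shows "(\<Sum>y\<in>UNIV. \<chi> (B x y)) = (if x = 0 then of_nat (card (UNIV :: 'm set)) else 0)"
proof (cases "x = 0")
  case True
  have "B 0 y = 0" for y
    using additive.zero[OF bilinear_form_additive_left[OF B(1)]] .
  then show ?thesis
    using True additive_character_zero[OF generating_character_imp_additive_character[OF \<chi>]]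
    by simp
next
  case False
  then obtain y0 where "\<chi> (B x y0) \<noteq> 1"
    using generating_character_bilinear_right_kernel[OF \<chi> B] by blast
  moreover have "additive_character (\<lambda>y. \<chi> (B x y))"
    using additive_character_comp_additive generating_character_imp_additive_character[OF \<chi>]
      bilinear_form_additive_right[OF B(1)] .
  ultimately show ?thesis
    using False sum_additive_character_eq_0 by auto
qed

lemma generating_character_bilinear_inj:
  assumes \<chi>: "generating_character \<chi>" and B: "bilinear_form lm rm B" "nondegenerate B"
  shows "inj (\<lambda>y x. \<chi> (B x y))"
proof (rule injI)
  fix a b
  assume eq: "(\<lambda>x. \<chi> (B x a)) = (\<lambda>x. \<chi> (B x b))"
  have \<chi>': "additive_character \<chi>"
    using generating_character_imp_additive_character[OF \<chi>] .
  have "\<chi> (B x (a - b)) = 1" for x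
  proof -
    have "\<chi> (B x (a - b)) = \<chi> (B x a) / \<chi> (B x b)"
      by (simp add: additive.diff[OF bilinear_form_additive_right[OF B(1)]]
          additive_character_diff[OF \<chi>'])
    also have "\<dots> = 1"
      using fun_cong[OF eq, of x] additive_character_nonzero[OF \<chi>'] by simp
    finally show ?thesis .
  qed
  then have "a - b = 0"
    by (rule generating_character_bilinear_left_kernel[OF \<chi> B])
  then show "a = b" by simp
qed

lemma generating_character_bilinear_surj:
  fixes B :: "'m::{ab_group_add,finite} \<Rightarrow> 'm \<Rightarrow> 'a::ring_1"
  assumes \<chi>: "generating_character \<chi>" and B: "bilinear_form lm rm B" "nondegenerate B"
    and \<psi>: "additive_character \<psi>"
  shows "\<exists>y. \<psi> = (\<lambda>x. \<chi> (B x y))"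
proof (rule ccontr)
  assume not_represented: "\<nexists>y. \<psi> = (\<lambda>x. \<chi> (B x y))"
  have row_zero: "(\<Sum>x\<in>UNIV. \<chi> (B x y) / \<psi> x) = 0" for y
  proof -
    obtain x0 where "\<psi> x0 \<noteq> \<chi> (B x0 y)"
      using not_represented by (auto simp: fun_eq_iff)
    then have "\<chi> (B x0 y) / \<psi> x0 \<noteq> 1"
      by simp
    moreover have "additive_character (\<lambda>x. \<chi> (B x y) / \<psi> x)"
      using additive_character_comp_additive[OF generating_character_imp_additive_character[OF \<chi>]
          bilinear_form_additive_left[OF B(1)]] \<psi>
      by (rule additive_character_divide)
    ultimately show ?thesis
      using sum_additive_character_eq_0 by blast
  qed
  have "0 = (\<Sum>y\<in>UNIV. \<Sum>x\<in>UNIV. \<chi> (B x y) / \<psi> x)"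
    by (simp add: row_zero)
  also have "\<dots> = (\<Sum>x\<in>UNIV. (\<Sum>y\<in>UNIV. \<chi> (B x y)) / \<psi> x)"
    by (subst sum.swap) (simp add: sum_divide_distrib)
  also have "\<dots> = (\<Sum>x\<in>UNIV. if x = 0 then of_nat (card (UNIV :: 'm set)) / \<psi> x else 0)"
    by (intro sum.cong refl) (simp add: sum_generating_character_bilinear[OF \<chi> B])
  also have "\<dots> = of_nat (card (UNIV :: 'm set))"
    by (simp add: additive_character_zero[OF \<psi>])
  finally show False by simp
qed

theorem bij_betw_generating_character_bilinear_dual:
  fixes B :: "'m::{ab_group_add,finite} \<Rightarrow> 'm \<Rightarrow> 'a::ring_1"
  assumes \<chi>: "generating_character \<chi>" and B: "bilinear_form lm rm B" "nondegenerate B"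
  shows "bij_betw (\<lambda>y x. \<chi> (B x y)) UNIV {\<psi>. additive_character \<psi>}"
proof (rule bij_betw_imageI)
  show "inj_on (\<lambda>y x. \<chi> (B x y)) UNIV"
    using generating_character_bilinear_inj[OF \<chi> B] .
  show "range (\<lambda>y x. \<chi> (B x y)) = {\<psi>. additive_character \<psi>}"
    using generating_character_bilinear_surj[OF \<chi> B]
      additive_character_comp_additive[OF generating_character_imp_additive_character[OF \<chi>]
        bilinear_form_additive_left[OF B(1)]]
    by auto
qed

lemma generating_character_bilinear_columns_bij:
  fixes B1 B2 :: "'m::{ab_group_add,finite} \<Rightarrow> 'm \<Rightarrow> 'a::ring_1"
  assumes "generating_character \<chi>1" "bilinear_form lm rm B1" "nondegenerate B1"
    and "generating_character \<chi>2" "bilinear_form lm rm B2" "nondegenerate B2"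
  obtains f where "bij f" and "\<And>x y. \<chi>2 (B2 x y) = \<chi>1 (B1 x (f y))"
proof
  let ?D1 = "\<lambda>y x. \<chi>1 (B1 x y)" and ?D2 = "\<lambda>y x. \<chi>2 (B2 x y)"
  have D1: "bij_betw ?D1 UNIV {\<psi>. additive_character \<psi>}"
    and D2: "bij_betw ?D2 UNIV {\<psi>. additive_character \<psi>}"
    using assms by (simp_all add: bij_betw_generating_character_bilinear_dual)
  show "bij (inv_into UNIV ?D1 \<circ> ?D2)"
    using bij_betw_trans[OF D2 bij_betw_inv_into[OF D1]] .
  show "\<chi>2 (B2 x y) = \<chi>1 (B1 x ((inv_into UNIV ?D1 \<circ> ?D2) y))" for x y
  proof -
    have "?D2 y \<in> range ?D1"
      using bij_betw_apply[OF D2, of y] bij_betw_imp_surj_on[OF D1] by simp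
    then have "?D1 (inv_into UNIV ?D1 (?D2 y)) = ?D2 y"
      by (rule f_inv_into_f)
    from fun_cong[OF this, of x] show ?thesis by simp
  qed
qed

lemma permutes_conjugate_bij_betw:
  assumes x: "bij_betw x S T" and f: "bij_betw f T T"
  obtains \<tau> where "\<tau> permutes S" and "\<And>j. j \<in> S \<Longrightarrow> x (\<tau> j) = f (x j)"
proof
  define \<tau> where "\<tau> j = (if j \<in> S then inv_into S x (f (x j)) else j)" for j
  have "bij_betw (inv_into S x \<circ> f \<circ> x) S S"
    using bij_betw_trans[OF bij_betw_trans[OF x f] bij_betw_inv_into[OF x]] by (simp add: comp_assoc)
  then have "bij_betw \<tau> S S"
    by (rule bij_betw_cong[THEN iffD1, rotated]) (simp add: \<tau>_def)
  then show "\<tau> permutes S"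
    by (rule bij_imp_permutes) (simp add: \<tau>_def)
  show "x (\<tau> j) = f (x j)" if "j \<in> S" for j
    using bij_betw_apply[OF f bij_betw_apply[OF x that]] bij_betw_imp_surj_on[OF x] that
    by (simp add: \<tau>_def f_inv_into_f)
qed

lemma mat_equivalent_permute_columns:
  assumes "\<tau> permutes {0..n}" and "\<And>i j. i \<le> n \<Longrightarrow> j \<le> n \<Longrightarrow> C i j = A i (\<tau> j)"
  shows "mat_equivalent n A C"
  unfolding mat_equivalent_def
proof (intro exI conjI)
  show "id permutes {0..n}" by simp
  show "\<forall>i\<le>n. root_of_unity 1" and "\<forall>j\<le>n. root_of_unity 1"
    by (auto simp: root_of_unity_def)
qed (use assms in auto)

theorem propositionA5:
  fixes lm :: "'a::{ring_1,finite} \<Rightarrow> 'm::{ab_group_add,finite} \<Rightarrow> 'm"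
    and rm :: "'m \<Rightarrow> 'a \<Rightarrow> 'm"
    and x :: "nat \<Rightarrow> 'm" and n :: nat
  assumes "Frobenius_ring TYPE('a)"
    and "bimodule lm rm"
    and "bij_betw x {0..n} (UNIV :: 'm set)" and "x 0 = 0"
    and "generating_character \<chi>1" and "bilinear_form lm rm B1" and "nondegenerate B1"
    and "generating_character \<chi>2" and "bilinear_form lm rm B2" and "nondegenerate B2"
  shows "mat_equivalent n (\<lambda>i j. \<chi>1 (B1 (x i) (x j))) (\<lambda>i j. \<chi>2 (B2 (x i) (x j)))"
proof -
  obtain f where "bij f" and f: "\<And>z y. \<chi>2 (B2 z y) = \<chi>1 (B1 z (f y))"
    using generating_character_bilinear_columns_bij assms(5-10) by blast
  obtain \<tau> where "\<tau> permutes {0..n}" and \<tau>: "\<And>j. j \<in> {0..n} \<Longrightarrow> x (\<tau> j) = f (x j)"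
    using permutes_conjugate_bij_betw[OF assms(3) \<open>bij f\<close>] by blast
  show ?thesis
    using \<open>\<tau> permutes {0..n}\<close> by (rule mat_equivalent_permute_columns) (simp add: f \<tau>)
qed

end
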